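(* Let $A,B\in\mathcal{M}_n$, let $\psi\colon H^*(M(A);\mathbb{Z})\to H^*(M(B);\mathbb{Z})$ be a graded ring isomorphism (also denoting its rationalization by $\psi$), and let $\sigma$ be a permutation of $\{1,\dots,n\}$ and $q_1,\dots,q_n$ nonzero rationals with $\psi(y^A_j)=q_jy^B_{\sigma(j)}$ for all $j$. Fix $j\in\{1,\dots,n\}$ and suppose $a\in\mathbb{Z}\setminus\{0\}$, $u\in H^2(M(B);\mathbb{Z})$ and $k\in\{1,\dots,n\}$ satisfy $u(u+a\alpha^B_k)=0$ and $\mathrm{ht}(u)<k$. (i) If $(\psi(x^A_j),\psi(x^A_j-\alpha^A_j))=(ax^B_k+u,\ a(x^B_k-\alpha^B_k)-u)$, then $q_j=a$, $k=\sigma(j)$, and $a^i_j=0$ for every $i$ with $\sigma(i)>\sigma(j)$. (ii) If $(\psi(x^A_j),\psi(x^A_j-\alpha^A_j))=(ax^B_k+u,\ -a(x^B_k-\alpha^B_k)+u)$, then $\alpha^A_j=2aq_i^{-1}y^A_i$ for some $i<j$.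
   Context: Let $\mathcal{M}_n$ be the set of integral strictly upper triangular $n\times n$ matrices $A=(A^i_j)$ ($A^i_j$ is the $(i,j)$ entry, and $A^i_j=0$ for $i\ge j$). For $A\in\mathcal{M}_n$, $M(A)$ denotes the Bott manifold obtained as the quotient of $(S^3)^n$ ($S^3\subset\mathbb{C}^2$ the unit sphere) by the free $(S^1)^n$-action $(g_1,\dots,g_n)\cdot((z_1,w_1),\dots,(z_n,w_n))=\big(((\prod_{k<j}g_k^{-A^k_j})g_jz_j,\ g_jw_j)\big)_{j=1}^n$. Let $x^A_j\in H^2(M(A);\mathbb{Z})$ be the first Chern class of the line bundle obtained as the quotient of $(S^3)^n\times\mathbb{C}$ where $g$ acts on the $\mathbb{C}$-factor by $g_j^{-1}$. Put $\alpha^A_j=\sum_{i<j}A^i_jx^A_i$. Then $H^*(M(A);\mathbb{Z})=\mathbb{Z}[x^A_1,\dots,x^A_n]/((x^A_j)^2-\alpha^A_jx^A_j\mid j=1,\dots,n)$. Define $y^A_j=x^A_j-\tfrac12\alpha^A_j\in H^2(M(A);\mathbb{Q})$. Let $a^i_j$ denote the $(i,j)$ entry of the matrix $(E-\tfrac12A)^{-1}$ ($E$ the identity matrix), so that $x^A_j=\sum_{i\le j}a^i_jy^A_i$. The same notation is used for $B$. For $v=\sum_i c_ix^B_i\in H^2(M(B);\mathbb{Z})$, the height $\mathrm{ht}(v)$ is $\max\{i\mid c_i\neq0\}$ (taken to be $0$ if $v=0$). *)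

theory Defs
  imports Complex_Main "HOL-Library.Poly_Mapping" "HOL-Combinatorics.Permutations"
begin

type_synonym ipoly = "(nat \<Rightarrow>\<^sub>0 nat) \<Rightarrow>\<^sub>0 int"

text \<open>The variable x_i (a monomial is a finitely supported exponent vector).\<close>
definition X :: "nat \<Rightarrow> ipoly" where
  "X i = Poly_Mapping.single (Poly_Mapping.single i 1) 1"

definition PolyN :: "nat \<Rightarrow> ipoly set" where
  "PolyN n = {p. \<forall>m \<in> Poly_Mapping.keys p. Poly_Mapping.keys m \<subseteq> {1..n}}"

text \<open>Homogeneous of polynomial degree d (cohomological degree 2d).\<close>
definition homog :: "nat \<Rightarrow> ipoly \<Rightarrow> bool" where
  "homog d p \<longleftrightarrow> (\<forall>m \<in> Poly_Mapping.keys p. (\<Sum>i\<in>Poly_Mapping.keys m. Poly_Mapping.lookup m i) = d)"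

definition lin :: "ipoly \<Rightarrow> nat \<Rightarrow> int" where
  "lin p k = Poly_Mapping.lookup p (Poly_Mapping.single k 1)"

text \<open>A in M_n: integral strictly upper triangular n x n matrix, entries A i j,
  indices 1..n (entries outside are 0).\<close>
definition bott_matrix :: "nat \<Rightarrow> (nat \<Rightarrow> nat \<Rightarrow> int) \<Rightarrow> bool" where
  "bott_matrix n A \<longleftrightarrow> (\<forall>i j. (i \<notin> {1..n} \<or> j \<notin> {1..n} \<or> j \<le> i) \<longrightarrow> A i j = 0)"

definition alpha :: "(nat \<Rightarrow> nat \<Rightarrow> int) \<Rightarrow> nat \<Rightarrow> ipoly" where
  "alpha A j = (\<Sum>i\<in>{1..<j}. Poly_Mapping.single (Poly_Mapping.single i 1) (A i j))"

text \<open>The ideal of Z[x_1..x_n] generated by x_j^2 - alpha_j x_j, j = 1..n;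
  H^*(M(A);Z) = Z[x_1..x_n] / bott_ideal n A, with x^A_j the class of X j.\<close>
definition bott_ideal :: "nat \<Rightarrow> (nat \<Rightarrow> nat \<Rightarrow> int) \<Rightarrow> ipoly set" where
  "bott_ideal n A = {p. \<exists>c. (\<forall>j. c j \<in> PolyN n) \<and>
      p = (\<Sum>j\<in>{1..n}. c j * (X j ^ 2 - alpha A j * X j))}"

text \<open>A graded ring isomorphism psi : H^*(M(A);Z) -> H^*(M(B);Z), given by a map f on
  representatives (f p represents psi [p]).\<close>
definition graded_ring_iso ::
  "nat \<Rightarrow> (nat \<Rightarrow> nat \<Rightarrow> int) \<Rightarrow> (nat \<Rightarrow> nat \<Rightarrow> int) \<Rightarrow> (ipoly \<Rightarrow> ipoly) \<Rightarrow> bool" where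
  "graded_ring_iso n A B f \<longleftrightarrow>
     (\<forall>p \<in> PolyN n. f p \<in> PolyN n) \<and>
     (\<forall>p \<in> PolyN n. \<forall>p' \<in> PolyN n. p - p' \<in> bott_ideal n A \<longrightarrow> f p - f p' \<in> bott_ideal n B) \<and>
     (\<forall>p \<in> PolyN n. \<forall>p' \<in> PolyN n. f (p + p') - (f p + f p') \<in> bott_ideal n B) \<and>
     (\<forall>p \<in> PolyN n. \<forall>p' \<in> PolyN n. f (p * p') - f p * f p' \<in> bott_ideal n B) \<and>
     f 1 - 1 \<in> bott_ideal n B \<and>
     (\<forall>p \<in> PolyN n. f p \<in> bott_ideal n B \<longrightarrow> p \<in> bott_ideal n A) \<and>
     (\<forall>q \<in> PolyN n. \<exists>p \<in> PolyN n. f p - q \<in> bott_ideal n B) \<and>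
     (\<forall>d. \<forall>p \<in> PolyN n. homog d p \<longrightarrow>
        (\<exists>p' \<in> PolyN n. homog d p' \<and> f p - p' \<in> bott_ideal n B))"

text \<open>H^2(M(B);Z): homogeneous linear polynomials in x_1..x_n (no relations in degree 2).\<close>
definition H2 :: "nat \<Rightarrow> ipoly set" where
  "H2 n = {p \<in> PolyN n. homog 1 p}"

definition ht :: "ipoly \<Rightarrow> nat" where
  "ht v = Max ({i. lin v i \<noteq> 0} \<union> {0})"

text \<open>Vectors of H^2(M(A);Q) are written in coordinates w.r.t. the basis x^A_1..x^A_n.
  y^A_j = x^A_j - alpha^A_j / 2:\<close>
definition yvec :: "(nat \<Rightarrow> nat \<Rightarrow> int) \<Rightarrow> nat \<Rightarrow> nat \<Rightarrow> rat" where
  "yvec A j k = (if k = j then 1 else if k \<in> {1..<j} then - of_int (A k j) / 2 else 0)"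

definition alphavec :: "(nat \<Rightarrow> nat \<Rightarrow> int) \<Rightarrow> nat \<Rightarrow> nat \<Rightarrow> rat" where
  "alphavec A j k = (if k \<in> {1..<j} then of_int (A k j) else 0)"

text \<open>Rationalization of psi on H^2: psi(x^A_i) = sum_k (lin (f (X i)) k) x^B_k.\<close>
definition psiQ :: "nat \<Rightarrow> (ipoly \<Rightarrow> ipoly) \<Rightarrow> (nat \<Rightarrow> rat) \<Rightarrow> nat \<Rightarrow> rat" where
  "psiQ n f v k = (\<Sum>i\<in>{1..n}. v i * of_int (lin (f (X i)) k))"

text \<open>The entries a^i_j of (E - A/2)^{-1}.\<close>
definition ainv :: "nat \<Rightarrow> (nat \<Rightarrow> nat \<Rightarrow> int) \<Rightarrow> nat \<Rightarrow> nat \<Rightarrow> rat" where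
  "ainv n A = (THE N. (\<forall>i j. (i \<notin> {1..n} \<or> j \<notin> {1..n}) \<longrightarrow> N i j = 0) \<and>
     (\<forall>i\<in>{1..n}. \<forall>j\<in>{1..n}.
        (\<Sum>k\<in>{1..n}. ((if i = k then 1 else 0) - of_int (A i k) / 2) * N k j)
          = (if i = j then 1 else 0)))"

end

theory Submission
  imports Defs
begin

text \<open>
  Only degree two matters. The relations of H^*(M(B)) have no terms of degree below two, so the
  coefficient of x_l in psi(p) depends only on the class of p and is additive in p; on H^2 the
  isomorphism is therefore the rational linear map psiQ. The classes y^B_i are unitriangular in
  the basis x^B_i, so a combination sum_i d_i y^B_{sigma(i)} whose coordinates above t vanish has
  d_i = 0 whenever sigma(i) > t.

  In case (i) the hypotheses give psi(alpha^A_j) = a alpha^B_k + 2u, hence psi(y^A_j) = a y^B_k,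
  which forces sigma(j) = k and q_j = a. Writing x^A_j = sum_i a^i_j y^A_i, the image
  psi(x^A_j) = sum_i a^i_j q_i y^B_{sigma(i)} equals a x^B_k + u, which has no coordinates above k
  because ht(u) < k; so a^i_j = 0 whenever sigma(i) > k. In case (ii) they give
  psi(alpha^A_j) = 2a y^B_k = psi((2a/q_i) y^A_i) for the i with sigma(i) = k, and psi is injective
  on H^2; this i is below j because alpha^A_j involves only the x^A_i with i < j.
\<close>

definition monomial_degree :: "(nat \<Rightarrow>\<^sub>0 nat) \<Rightarrow> nat" where
  "monomial_degree m = (\<Sum>i\<in>Poly_Mapping.keys m. Poly_Mapping.lookup m i)"

lemma monomial_degree_add: "monomial_degree (m + m') = monomial_degree m + monomial_degree m'"
  unfolding monomial_degree_def by (rule setsum_keys_plus_distrib) auto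

lemma monomial_degree_single [simp]: "monomial_degree (Poly_Mapping.single i d) = d"
  by (simp add: monomial_degree_def)

definition order_ge_two :: "ipoly \<Rightarrow> bool" where
  "order_ge_two p \<longleftrightarrow> (\<forall>m\<in>Poly_Mapping.keys p. 2 \<le> monomial_degree m)"

lemma order_ge_two_zero: "order_ge_two 0"
  by (simp add: order_ge_two_def)

lemma order_ge_two_mult: "order_ge_two g \<Longrightarrow> order_ge_two (c * g)"
  unfolding order_ge_two_def using keys_mult[of c g] by (fastforce simp: monomial_degree_add)

lemma order_ge_two_add: "order_ge_two g \<Longrightarrow> order_ge_two h \<Longrightarrow> order_ge_two (g + h)"
  unfolding order_ge_two_def using keys_add[of g h] by blast

lemma order_ge_two_diff: "order_ge_two g \<Longrightarrow> order_ge_two h \<Longrightarrow> order_ge_two (g - h)"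
  unfolding order_ge_two_def using keys_diff[of g h] by blast

lemma order_ge_two_sum: "(\<And>i. i \<in> S \<Longrightarrow> order_ge_two (g i)) \<Longrightarrow> order_ge_two (\<Sum>i\<in>S. g i)"
  by (induction S rule: infinite_finite_induct) (simp_all add: order_ge_two_add order_ge_two_zero)

lemma order_ge_two_single: "2 \<le> monomial_degree m \<Longrightarrow> order_ge_two (Poly_Mapping.single m c)"
  unfolding order_ge_two_def by simp

lemma order_ge_two_bott_relation: "order_ge_two (X j ^ 2 - alpha A j * X j)"
proof (rule order_ge_two_diff)
  show "order_ge_two (X j ^ 2)"
    by (simp add: X_def power2_eq_square mult_single order_ge_two_single monomial_degree_add)
  have "alpha A j * X j =
      (\<Sum>i\<in>{1..<j}. Poly_Mapping.single (Poly_Mapping.single i 1 + Poly_Mapping.single j 1) (A i j))"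
    by (simp add: alpha_def X_def sum_distrib_right mult_single)
  then show "order_ge_two (alpha A j * X j)"
    by (simp add: order_ge_two_sum order_ge_two_single monomial_degree_add)
qed

lemma bott_ideal_order_ge_two: "p \<in> bott_ideal n A \<Longrightarrow> order_ge_two p"
  unfolding bott_ideal_def
  by (auto intro!: order_ge_two_sum order_ge_two_mult order_ge_two_bott_relation)

lemma lin_eq_0_if_order_ge_two: "order_ge_two p \<Longrightarrow> lin p l = 0"
  unfolding order_ge_two_def lin_def by (force simp: in_keys_iff)

lemma lin_add: "lin (p + q) l = lin p l + lin q l"
  by (simp add: lin_def lookup_add)

lemma lin_diff: "lin (p - q) l = lin p l - lin q l"
  by (simp add: lin_def lookup_minus)

lemma lin_eq_mod_bott_ideal: "p - q \<in> bott_ideal n A \<Longrightarrow> lin p l = lin q l"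
  using lin_eq_0_if_order_ge_two[OF bott_ideal_order_ge_two, of "p - q"] by (simp add: lin_diff)

lemma single_one_eq_single_one_iff [simp]:
  "Poly_Mapping.single i (Suc 0) = Poly_Mapping.single l (Suc 0) \<longleftrightarrow> i = l"
  by (metis lookup_single_eq lookup_single_not_eq nat.distinct(1))

lemma lin_single: "lin (Poly_Mapping.single (Poly_Mapping.single i 1) c) l = (if l = i then c else 0)"
  by (simp add: lin_def lookup_single when_def)

lemma lin_X: "lin (X i) l = (if l = i then 1 else 0)"
  unfolding X_def by (rule lin_single)

lemma lin_scale: "lin (Poly_Mapping.single 0 a * p) l = a * lin p l"
  by (simp add: lin_def map.rep_eq when_def flip: mult_map_scale_conv_mult)

lemma of_int_lin_alpha: "of_int (lin (alpha A j) l) = alphavec A j l"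
  by (simp add: alpha_def alphavec_def lin_def lookup_sum lookup_single when_def)

lemma lin_gt_ht: "ht u < l \<Longrightarrow> lin u l = 0"
proof (rule ccontr)
  assume "ht u < l" "lin u l \<noteq> 0"
  have "{i. lin u i \<noteq> 0} = (\<lambda>i. Poly_Mapping.single i 1) -` Poly_Mapping.keys u"
    by (auto simp: lin_def in_keys_iff)
  then have "finite ({i. lin u i \<noteq> 0} \<union> {0})"
    by (simp add: finite_vimageI inj_def)
  then have "l \<le> ht u"
    unfolding ht_def using \<open>lin u l \<noteq> 0\<close> by (intro Max_ge) auto
  with \<open>ht u < l\<close> show False by simp
qed

lemma PolyN_zero: "0 \<in> PolyN n"
  by (simp add: PolyN_def)

lemma PolyN_add: "p \<in> PolyN n \<Longrightarrow> q \<in> PolyN n \<Longrightarrow> p + q \<in> PolyN n"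
  unfolding PolyN_def using keys_add[of p q] by blast

lemma PolyN_uminus: "p \<in> PolyN n \<Longrightarrow> - p \<in> PolyN n"
  unfolding PolyN_def by simp

lemma PolyN_single: "i \<in> {1..n} \<Longrightarrow> Poly_Mapping.single (Poly_Mapping.single i 1) c \<in> PolyN n"
  unfolding PolyN_def by simp

lemma PolyN_X: "i \<in> {1..n} \<Longrightarrow> X i \<in> PolyN n"
  unfolding X_def by (rule PolyN_single)

lemma PolyN_sum: "(\<And>i. i \<in> S \<Longrightarrow> g i \<in> PolyN n) \<Longrightarrow> (\<Sum>i\<in>S. g i) \<in> PolyN n"
  by (induction S rule: infinite_finite_induct) (auto intro!: PolyN_add PolyN_zero)

lemma PolyN_alpha: "j \<in> {1..n} \<Longrightarrow> alpha A j \<in> PolyN n"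
  unfolding alpha_def by (rule PolyN_sum, rule PolyN_single) auto

lemma psiQ_sum: "psiQ n f (\<lambda>m. \<Sum>i\<in>I. c i * w i m) l = (\<Sum>i\<in>I. c i * psiQ n f (w i) l)"
  unfolding psiQ_def sum_distrib_right sum_distrib_left mult.assoc by (rule sum.swap)

lemma psiQ_diff: "psiQ n f (\<lambda>m. v m - w m) l = psiQ n f v l - psiQ n f w l"
  by (simp add: psiQ_def left_diff_distrib sum_subtractf)

lemma psiQ_scale: "psiQ n f (\<lambda>m. c * v m) l = c * psiQ n f v l"
  by (simp add: psiQ_def sum_distrib_left mult.assoc)

lemma psiQ_divide: "psiQ n f (\<lambda>m. v m / c) l = psiQ n f v l / c"
  by (simp add: psiQ_def sum_divide_distrib)

lemma psiQ_unit: "j \<in> {1..n} \<Longrightarrow> psiQ n f (\<lambda>m. if m = j then 1 else 0) l = of_int (lin (f (X j)) l)"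
  unfolding psiQ_def by (simp add: if_distrib[of "\<lambda>x. x * _"] cong: if_cong)

lemma yvec_eq_unit_minus_half_alphavec: "yvec A j m = (if m = j then 1 else 0) - alphavec A j m / 2"
  by (simp add: yvec_def alphavec_def)

lemma yvec_diag [simp]: "yvec A j j = 1"
  by (simp add: yvec_def)

lemma yvec_eq_0_above: "j < l \<Longrightarrow> yvec A j l = 0"
  by (simp add: yvec_def)

lemma yvec_eq_0_outside: "k \<in> {1..n} \<Longrightarrow> l \<notin> {1..n} \<Longrightarrow> yvec A k l = 0"
  by (auto simp: yvec_def)

lemma yvec_bott_matrix:
  "bott_matrix n A \<Longrightarrow> i \<in> {1..n} \<Longrightarrow> k \<in> {1..n} \<Longrightarrow>
    yvec A k i = (if i = k then 1 else 0) - of_int (A i k) / 2"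
  unfolding bott_matrix_def yvec_def by auto

lemma scaled_yvec_eq:
  fixes c d :: rat
  assumes eq: "\<forall>l. c * yvec B s l = d * yvec B t l" and "c \<noteq> 0" "d \<noteq> 0"
  shows "s = t \<and> c = d"
proof -
  have "\<not> s < t"
    using eq[rule_format, of t] \<open>d \<noteq> 0\<close> by (auto simp: yvec_eq_0_above)
  moreover have "\<not> t < s"
    using eq[rule_format, of s] \<open>c \<noteq> 0\<close> by (auto simp: yvec_eq_0_above)
  ultimately have "s = t" by simp
  with eq[rule_format, of s] show ?thesis by simp
qed

lemma sum_yvec_vanishing_above:
  fixes d :: "nat \<Rightarrow> rat"
  assumes I: "finite I" "inj_on \<sigma> I"
    and vanish: "\<forall>l>t. (\<Sum>i\<in>I. d i * yvec B (\<sigma> i) l) = 0"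
    and i: "i \<in> I" "t < \<sigma> i"
  shows "d i = 0"
proof (rule ccontr)
  assume "d i \<noteq> 0"
  define J where "J = {i\<in>I. t < \<sigma> i \<and> d i \<noteq> 0}"
  have J: "finite (\<sigma> ` J)" "\<sigma> i \<in> \<sigma> ` J"
    using I i \<open>d i \<noteq> 0\<close> by (auto simp: J_def)
  then obtain i0 where i0: "i0 \<in> J" "\<sigma> i0 = Max (\<sigma> ` J)"
    by (metis Max_in empty_iff imageE)
  have top: "\<sigma> i' \<le> \<sigma> i0" if "i' \<in> J" for i'
    using i0(2) Max_ge[OF J(1)] that by simp
  \<comment> \<open>at the coordinate \<open>\<sigma> i0\<close> only the term of \<open>i0\<close> survives\<close>
  have "d i' * yvec B (\<sigma> i') (\<sigma> i0) = (if i' = i0 then d i' else 0)" if "i' \<in> I" for i'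
  proof (cases "\<sigma> i' < \<sigma> i0")
    case True
    then show ?thesis by (auto simp: yvec_eq_0_above)
  next
    case False
    show ?thesis
    proof (cases "i' = i0")
      case False
      have "i0 \<in> I" "t < \<sigma> i0"
        using i0(1) by (auto simp: J_def)
      moreover have "\<sigma> i' \<noteq> \<sigma> i0"
        using inj_on_eq_iff[OF I(2) that \<open>i0 \<in> I\<close>] \<open>i' \<noteq> i0\<close> by simp
      ultimately have "\<sigma> i0 < \<sigma> i'" "t < \<sigma> i'"
        using \<open>\<not> \<sigma> i' < \<sigma> i0\<close> by auto
      then have "i' \<notin> J"
        using top by fastforce
      with that \<open>t < \<sigma> i'\<close> False show ?thesis
        by (simp add: J_def)
    qed simp
  qed
  then have "(\<Sum>i'\<in>I. d i' * yvec B (\<sigma> i') (\<sigma> i0)) = d i0"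
    using I(1) i0(1) by (simp add: J_def cong: sum.cong)
  with vanish i0(1) show False by (simp add: J_def)
qed

context
  fixes n A B f
  assumes iso: "graded_ring_iso n A B f"
begin

lemma lin_f_add: "p \<in> PolyN n \<Longrightarrow> q \<in> PolyN n \<Longrightarrow> lin (f (p + q)) l = lin (f p) l + lin (f q) l"
  using iso lin_eq_mod_bott_ideal lin_add unfolding graded_ring_iso_def by metis

lemma lin_f_zero: "lin (f 0) l = 0"
  using lin_f_add[of 0 0 l] by (simp add: PolyN_def)

lemma lin_f_uminus: "p \<in> PolyN n \<Longrightarrow> lin (f (- p)) l = - lin (f p) l"
  using lin_f_add[OF _ PolyN_uminus, of p p l] lin_f_zero by simp

lemma lin_f_diff: "p \<in> PolyN n \<Longrightarrow> q \<in> PolyN n \<Longrightarrow> lin (f (p - q)) l = lin (f p) l - lin (f q) l"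
  using lin_f_add[OF _ PolyN_uminus, of p q l] lin_f_uminus[of q l] by simp

lemma lin_f_single:
  assumes i: "i \<in> {1..n}"
  shows "lin (f (Poly_Mapping.single (Poly_Mapping.single i 1) c)) l = c * lin (f (X i)) l"
proof (induction c rule: int_induct[where k = 0])
  case base
  show ?case by (simp add: lin_f_zero)
next
  case (step1 c)
  have "Poly_Mapping.single (Poly_Mapping.single i 1) (c + 1)
      = Poly_Mapping.single (Poly_Mapping.single i 1) c + X i"
    by (simp add: X_def single_add)
  then have "lin (f (Poly_Mapping.single (Poly_Mapping.single i 1) (c + 1))) l
      = lin (f (Poly_Mapping.single (Poly_Mapping.single i 1) c)) l + lin (f (X i)) l"
    using lin_f_add[OF PolyN_single[OF i] PolyN_X[OF i]] by simp
  with step1 show ?case by (simp add: algebra_simps)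
next
  case (step2 c)
  have "Poly_Mapping.single (Poly_Mapping.single i 1) (c - 1)
      = Poly_Mapping.single (Poly_Mapping.single i 1) c - X i"
    by (simp add: X_def single_diff)
  then have "lin (f (Poly_Mapping.single (Poly_Mapping.single i 1) (c - 1))) l
      = lin (f (Poly_Mapping.single (Poly_Mapping.single i 1) c)) l - lin (f (X i)) l"
    using lin_f_diff[OF PolyN_single[OF i] PolyN_X[OF i]] by simp
  with step2 show ?case by (simp add: algebra_simps)
qed

lemma lin_f_linear_combination:
  assumes "finite S" "S \<subseteq> {1..n}"
  shows "lin (f (\<Sum>i\<in>S. Poly_Mapping.single (Poly_Mapping.single i 1) (c i))) l
       = (\<Sum>i\<in>S. c i * lin (f (X i)) l)"
  using assms
proof (induction S rule: finite_induct)
  case empty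
  show ?case by (simp add: lin_f_zero)
next
  case (insert i S)
  have i: "i \<in> {1..n}" using insert.prems by simp
  have S: "(\<Sum>i\<in>S. Poly_Mapping.single (Poly_Mapping.single i 1) (c i)) \<in> PolyN n"
    using insert.prems by (intro PolyN_sum PolyN_single) auto
  show ?case
    using insert lin_f_add[OF PolyN_single[OF i] S] lin_f_single[OF i] by simp
qed

lemma lin_f_alpha:
  "j \<in> {1..n} \<Longrightarrow> lin (f (alpha A' j)) l = (\<Sum>i\<in>{1..<j}. A' i j * lin (f (X i)) l)"
  unfolding alpha_def by (rule lin_f_linear_combination) auto

lemma psiQ_alphavec:
  assumes j: "j \<in> {1..n}"
  shows "psiQ n f (alphavec A' j) l = of_int (lin (f (alpha A' j)) l)"
proof -
  have "psiQ n f (alphavec A' j) l = (\<Sum>m\<in>{1..n}. if m \<in> {1..<j} then of_int (A' m j) * of_int (lin (f (X m)) l) else 0)"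
    unfolding psiQ_def alphavec_def by (intro sum.cong) auto
  also have "\<dots> = (\<Sum>m\<in>{1..n} \<inter> {1..<j}. of_int (A' m j) * of_int (lin (f (X m)) l))"
    by (simp add: sum.inter_restrict)
  also have "{1..n} \<inter> {1..<j} = {1..<j}"
    using j by auto
  finally show ?thesis
    using lin_f_alpha[OF j] by simp
qed

lemma psiQ_yvec:
  assumes "j \<in> {1..n}"
  shows "psiQ n f (yvec A' j) l = of_int (lin (f (X j)) l) - of_int (lin (f (alpha A' j)) l) / 2"
proof -
  have "yvec A' j = (\<lambda>m. (if m = j then 1 else 0) - alphavec A' j m / 2)"
    by (rule ext) (simp add: yvec_eq_unit_minus_half_alphavec)
  then show ?thesis
    by (simp add: psiQ_diff psiQ_divide psiQ_unit[OF assms] psiQ_alphavec[OF assms])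
qed

lemma psiQ_yvec_if_images:
  assumes j: "j \<in> {1..n}"
    and h1: "f (X j) - (Poly_Mapping.single 0 a * X k + u) \<in> bott_ideal n B"
    and h2: "f (X j - alpha A j) - (Poly_Mapping.single 0 a * (X k - alpha B k) - u) \<in> bott_ideal n B"
  shows "psiQ n f (yvec A j) l = of_int a * yvec B k l"
proof -
  let ?x = "rat_of_int (lin (f (X j)) l)" and ?s = "rat_of_int (lin (f (alpha A j)) l)"
    and ?e = "rat_of_int (lin (X k) l)"
  have x: "?x = of_int a * ?e + of_int (lin u l)"
    using lin_eq_mod_bott_ideal[OF h1, of l] by (simp add: lin_add lin_scale)
  have "lin (f (X j)) l - lin (f (alpha A j)) l = a * (lin (X k) l - lin (alpha B k) l) - lin u l"
    using lin_eq_mod_bott_ideal[OF h2, of l] lin_f_diff[OF PolyN_X[OF j] PolyN_alpha[OF j, of A], of l]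
    by (simp add: lin_diff lin_scale)
  then have "?x - ?s = of_int a * (?e - alphavec B k l) - of_int (lin u l)"
    by (simp flip: of_int_lin_alpha of_int_diff of_int_mult)
  with x have s: "?s = of_int a * alphavec B k l + 2 * of_int (lin u l)"
    by (simp add: algebra_simps)
  have e: "?e = yvec B k l + alphavec B k l / 2"
    by (simp add: lin_X yvec_eq_unit_minus_half_alphavec)
  show ?thesis
    by (simp add: psiQ_yvec[OF j] x s e algebra_simps)
qed

lemma psiQ_alphavec_if_images:
  assumes j: "j \<in> {1..n}"
    and h1: "f (X j) - (Poly_Mapping.single 0 a * X k + u) \<in> bott_ideal n B"
    and h2: "f (X j - alpha A j) - (- (Poly_Mapping.single 0 a * (X k - alpha B k)) + u) \<in> bott_ideal n B"
  shows "psiQ n f (alphavec A j) l = 2 * of_int a * yvec B k l"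
proof -
  let ?x = "rat_of_int (lin (f (X j)) l)" and ?s = "rat_of_int (lin (f (alpha A j)) l)"
    and ?e = "rat_of_int (lin (X k) l)"
  have x: "?x = of_int a * ?e + of_int (lin u l)"
    using lin_eq_mod_bott_ideal[OF h1, of l] by (simp add: lin_add lin_scale)
  have "lin (f (X j)) l - lin (f (alpha A j)) l = lin u l - a * (lin (X k) l - lin (alpha B k) l)"
    using lin_eq_mod_bott_ideal[OF h2, of l] lin_f_diff[OF PolyN_X[OF j] PolyN_alpha[OF j, of A], of l]
    by (simp add: lin_diff lin_scale)
  then have "?x - ?s = of_int (lin u l) - of_int a * (?e - alphavec B k l)"
    by (simp flip: of_int_lin_alpha of_int_diff of_int_mult)
  moreover have "?e = yvec B k l + alphavec B k l / 2"
    by (simp add: lin_X yvec_eq_unit_minus_half_alphavec)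
  ultimately show ?thesis
    using x by (simp add: psiQ_alphavec[OF j] algebra_simps)
qed
end

text \<open>Back substitution for the upper unitriangular system (E - A/2) N = E.\<close>

function ainv_rec :: "nat \<Rightarrow> (nat \<Rightarrow> nat \<Rightarrow> int) \<Rightarrow> nat \<Rightarrow> nat \<Rightarrow> rat" where
  "ainv_rec n A i j =
     (if i \<in> {1..n} \<and> j \<in> {1..n}
      then (if i = j then 1 else 0) + (\<Sum>k\<in>{i<..n}. of_int (A i k) / 2 * ainv_rec n A k j)
      else 0)"
  by auto
termination by (relation "measure (\<lambda>(n, A, i, j). n - i)") auto

declare ainv_rec.simps [simp del]

definition inverts_E_minus_half :: "nat \<Rightarrow> (nat \<Rightarrow> nat \<Rightarrow> int) \<Rightarrow> (nat \<Rightarrow> nat \<Rightarrow> rat) \<Rightarrow> bool" where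
  "inverts_E_minus_half n A N \<longleftrightarrow>
     (\<forall>i j. (i \<notin> {1..n} \<or> j \<notin> {1..n}) \<longrightarrow> N i j = 0) \<and>
     (\<forall>i\<in>{1..n}. \<forall>j\<in>{1..n}.
        (\<Sum>k\<in>{1..n}. ((if i = k then 1 else 0) - of_int (A i k) / 2) * N k j)
          = (if i = j then 1 else 0))"

lemma E_minus_half_row:
  fixes N :: "nat \<Rightarrow> nat \<Rightarrow> rat"
  assumes A: "bott_matrix n A" and i: "i \<in> {1..n}"
  shows "(\<Sum>k\<in>{1..n}. ((if i = k then 1 else 0) - of_int (A i k) / 2) * N k j)
       = N i j - (\<Sum>k\<in>{i<..n}. of_int (A i k) / 2 * N k j)"
proof -
  have "(\<Sum>k\<in>{1..n}. of_int (A i k) / 2 * N k j) = (\<Sum>k\<in>{i<..n}. of_int (A i k) / 2 * N k j)"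
    using A i by (intro sum.mono_neutral_right) (auto simp: bott_matrix_def)
  then show ?thesis
    using i by (simp add: left_diff_distrib sum_subtractf if_distrib[of "\<lambda>x. x * _"] cong: if_cong)
qed

lemma inverts_E_minus_half_ainv_rec:
  assumes A: "bott_matrix n A"
  shows "inverts_E_minus_half n A (ainv_rec n A)"
  unfolding inverts_E_minus_half_def
proof (intro conjI allI impI ballI)
  fix i j :: nat
  assume "i \<notin> {1..n} \<or> j \<notin> {1..n}"
  then show "ainv_rec n A i j = 0"
    by (subst ainv_rec.simps) auto
next
  fix i j :: nat
  assume i: "i \<in> {1..n}" and j: "j \<in> {1..n}"
  have "ainv_rec n A i j
      = (if i = j then 1 else 0) + (\<Sum>k\<in>{i<..n}. of_int (A i k) / 2 * ainv_rec n A k j)"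
    using i j by (subst ainv_rec.simps) simp
  then show "(\<Sum>k\<in>{1..n}. ((if i = k then 1 else 0) - of_int (A i k) / 2) * ainv_rec n A k j)
      = (if i = j then 1 else 0)"
    unfolding E_minus_half_row[OF A i] by simp
qed

lemma inverts_E_minus_half_unique:
  assumes A: "bott_matrix n A" and N: "inverts_E_minus_half n A N"
  shows "N i j = ainv_rec n A i j"
proof (induction i rule: measure_induct_rule[of "\<lambda>i. n - i"])
  case (less i)
  show ?case
  proof (cases "i \<in> {1..n} \<and> j \<in> {1..n}")
    case True
    then have "N i j = (if i = j then 1 else 0) + (\<Sum>k\<in>{i<..n}. of_int (A i k) / 2 * N k j)"
      using N E_minus_half_row[OF A, of i N j] unfolding inverts_E_minus_half_def by simp
    also have "(\<Sum>k\<in>{i<..n}. of_int (A i k) / 2 * N k j)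
             = (\<Sum>k\<in>{i<..n}. of_int (A i k) / 2 * ainv_rec n A k j)"
      using less by (intro sum.cong) auto
    finally show ?thesis
      using True by (simp add: ainv_rec.simps[of n A i j])
  next
    case False
    with N show ?thesis
      unfolding inverts_E_minus_half_def by (auto simp: ainv_rec.simps[of n A i j])
  qed
qed

lemma inverts_E_minus_half_ainv:
  assumes A: "bott_matrix n A"
  shows "inverts_E_minus_half n A (ainv n A)"
proof -
  have "ainv n A = (THE N. inverts_E_minus_half n A N)"
    unfolding ainv_def inverts_E_minus_half_def ..
  also have "\<dots> = ainv_rec n A"
    by (rule the_equality[where P = "inverts_E_minus_half n A", OF inverts_E_minus_half_ainv_rec[OF A]])
      (auto intro!: ext inverts_E_minus_half_unique[OF A])
  finally show ?thesis
    using inverts_E_minus_half_ainv_rec[OF A] by simp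
qed

lemma sum_ainv_yvec:
  assumes A: "bott_matrix n A" and m: "m \<in> {1..n}"
  shows "(\<Sum>i\<in>{1..n}. ainv n A i m * yvec A i l) = (if l = m then 1 else 0)"
proof (cases "l \<in> {1..n}")
  case True
  have "(\<Sum>i\<in>{1..n}. ainv n A i m * yvec A i l)
      = (\<Sum>i\<in>{1..n}. ((if l = i then 1 else 0) - of_int (A l i) / 2) * ainv n A i m)"
    using yvec_bott_matrix[OF A True] by (intro sum.cong) auto
  with inverts_E_minus_half_ainv[OF A] True m show ?thesis
    unfolding inverts_E_minus_half_def by simp
next
  case False
  have "yvec A i l = 0" if "i \<in> {1..n}" for i
    using that False by (rule yvec_eq_0_outside)
  with False m show ?thesis by auto
qed

lemma eq_sum_ainv_yvec:
  assumes A: "bott_matrix n A" and v: "\<forall>l. l \<notin> {1..n} \<longrightarrow> v l = 0"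
  shows "v l = (\<Sum>i\<in>{1..n}. (\<Sum>m\<in>{1..n}. v m * ainv n A i m) * yvec A i l)"
proof -
  have "(\<Sum>i\<in>{1..n}. (\<Sum>m\<in>{1..n}. v m * ainv n A i m) * yvec A i l)
      = (\<Sum>m\<in>{1..n}. v m * (\<Sum>i\<in>{1..n}. ainv n A i m * yvec A i l))"
    unfolding sum_distrib_left sum_distrib_right mult.assoc by (rule sum.swap)
  also have "\<dots> = (\<Sum>m\<in>{1..n}. if m = l then v m else 0)"
    by (intro sum.cong refl) (subst sum_ainv_yvec[OF A]; auto)
  also have "\<dots> = v l"
    using v by auto
  finally show ?thesis ..
qed

lemma psiQ_sum_yvec:
  assumes psi_y: "\<forall>i\<in>{1..n}. \<forall>l. psiQ n f (yvec A i) l = q i * yvec B (\<sigma> i) l"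
  shows "psiQ n f (\<lambda>m. \<Sum>i\<in>{1..n}. c i * yvec A i m) l = (\<Sum>i\<in>{1..n}. c i * q i * yvec B (\<sigma> i) l)"
  using psi_y by (simp add: psiQ_sum mult.assoc)

lemma coeff_eq_0_if_psiQ_vanishes_above:
  assumes inj: "inj_on \<sigma> {1..n}" and q_nz: "\<forall>i\<in>{1..n}. q i \<noteq> 0"
    and psi_y: "\<forall>i\<in>{1..n}. \<forall>l. psiQ n f (yvec A i) l = q i * yvec B (\<sigma> i) l"
    and vanish: "\<forall>l>t. psiQ n f (\<lambda>m. \<Sum>i\<in>{1..n}. c i * yvec A i m) l = 0"
    and i: "i \<in> {1..n}" "t < \<sigma> i"
  shows "c i = 0"
proof -
  have "\<forall>l>t. (\<Sum>i\<in>{1..n}. c i * q i * yvec B (\<sigma> i) l) = 0"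
    using vanish psiQ_sum_yvec[OF psi_y] by simp
  then have "c i * q i = 0"
    using sum_yvec_vanishing_above[of "{1..n}" \<sigma> t "\<lambda>i. c i * q i" B i] inj i
    by simp
  with q_nz i show ?thesis by simp
qed

lemma ainv_eq_0_if_psiQ_vanishes_above:
  assumes A: "bott_matrix n A" and sigma: "\<sigma> permutes {1..n}" and q_nz: "\<forall>i\<in>{1..n}. q i \<noteq> 0"
    and psi_y: "\<forall>i\<in>{1..n}. \<forall>l. psiQ n f (yvec A i) l = q i * yvec B (\<sigma> i) l"
    and j: "j \<in> {1..n}"
    and vanish: "\<forall>l>t. psiQ n f (\<lambda>m. if m = j then 1 else 0) l = 0"
    and i: "i \<in> {1..n}" "t < \<sigma> i"
  shows "ainv n A i j = 0"
proof -
  have "(\<lambda>m. if m = j then 1 else 0) = (\<lambda>m. \<Sum>i\<in>{1..n}. ainv n A i j * yvec A i m)"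
    using sum_ainv_yvec[OF A j] by auto
  with vanish show ?thesis
    using coeff_eq_0_if_psiQ_vanishes_above[OF permutes_inj_on[OF sigma] q_nz psi_y _ i] by simp
qed

lemma psiQ_eq_0_imp_eq_0:
  assumes A: "bott_matrix n A" and sigma: "\<sigma> permutes {1..n}" and q_nz: "\<forall>i\<in>{1..n}. q i \<noteq> 0"
    and psi_y: "\<forall>i\<in>{1..n}. \<forall>l. psiQ n f (yvec A i) l = q i * yvec B (\<sigma> i) l"
    and supp: "\<forall>l. l \<notin> {1..n} \<longrightarrow> v l = 0"
    and zero: "\<forall>l. psiQ n f v l = 0"
  shows "v l = 0"
proof -
  define c where "c i = (\<Sum>m\<in>{1..n}. v m * ainv n A i m)" for i
  have v: "v = (\<lambda>l. \<Sum>i\<in>{1..n}. c i * yvec A i l)"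
    unfolding c_def by (rule ext, rule eq_sum_ainv_yvec[OF A supp])
  have "c i = 0" if i: "i \<in> {1..n}" for i
  proof (rule coeff_eq_0_if_psiQ_vanishes_above[OF permutes_inj_on[OF sigma] q_nz psi_y _ i])
    show "\<forall>l>0. psiQ n f (\<lambda>m. \<Sum>i\<in>{1..n}. c i * yvec A i m) l = 0"
      using zero[unfolded v] by blast
    show "0 < \<sigma> i"
      using permutes_in_image[OF sigma, of i] i by simp
  qed
  then show ?thesis
    by (subst v) simp
qed

lemma alphavec_eq_scaled_yvec:
  assumes A: "bott_matrix n A" and sigma: "\<sigma> permutes {1..n}" and q_nz: "\<forall>i\<in>{1..n}. q i \<noteq> 0"
    and psi_y: "\<forall>i\<in>{1..n}. \<forall>l. psiQ n f (yvec A i) l = q i * yvec B (\<sigma> i) l"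
    and j: "j \<in> {1..n}" and i0: "i0 \<in> {1..n}"
    and psi_alpha: "\<forall>l. psiQ n f (alphavec A j) l = c * yvec B (\<sigma> i0) l" and "c \<noteq> 0"
  shows "i0 \<in> {1..<j} \<and> (\<forall>l. alphavec A j l = c / q i0 * yvec A i0 l)"
proof -
  have eq: "alphavec A j l = c / q i0 * yvec A i0 l" for l
  proof -
    have "\<forall>l. l \<notin> {1..n} \<longrightarrow> alphavec A j l - c / q i0 * yvec A i0 l = 0"
      using j i0 by (auto simp: alphavec_def yvec_eq_0_outside)
    moreover have "\<forall>l. psiQ n f (\<lambda>m. alphavec A j m - c / q i0 * yvec A i0 m) l = 0"
      using psi_alpha psi_y i0 q_nz by (simp add: psiQ_diff psiQ_divide psiQ_scale)
    ultimately have "alphavec A j l - c / q i0 * yvec A i0 l = 0"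
      by (rule psiQ_eq_0_imp_eq_0[OF A sigma q_nz psi_y, of "\<lambda>m. alphavec A j m - c / q i0 * yvec A i0 m"])
    then show ?thesis
      by simp
  qed
  have "alphavec A j i0 \<noteq> 0"
    using eq[of i0] \<open>c \<noteq> 0\<close> q_nz i0 by simp
  then have "i0 \<in> {1..<j}"
    by (auto simp: alphavec_def split: if_splits)
  with eq show ?thesis by blast
qed

theorem lemma4p3:
  fixes n :: nat and A B :: "nat \<Rightarrow> nat \<Rightarrow> int" and f :: "ipoly \<Rightarrow> ipoly"
    and \<sigma> :: "nat \<Rightarrow> nat" and q :: "nat \<Rightarrow> rat"
    and j k :: nat and a :: int and u :: ipoly
  assumes A: "bott_matrix n A" and B: "bott_matrix n B"
    and psi: "graded_ring_iso n A B f"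
    and sigma: "\<sigma> permutes {1..n}"
    and q_nz: "\<forall>i\<in>{1..n}. q i \<noteq> 0"
    and psi_y: "\<forall>i\<in>{1..n}. \<forall>l. psiQ n f (yvec A i) l = q i * yvec B (\<sigma> i) l"
    and j: "j \<in> {1..n}"
    and a: "a \<noteq> 0" and u: "u \<in> H2 n" and k: "k \<in> {1..n}"
    and u_rel: "u * (u + Poly_Mapping.single 0 a * alpha B k) \<in> bott_ideal n B"
    and ht_u: "ht u < k"
  shows
   "(f (X j) - (Poly_Mapping.single 0 a * X k + u) \<in> bott_ideal n B \<and>
     f (X j - alpha A j) - (Poly_Mapping.single 0 a * (X k - alpha B k) - u) \<in> bott_ideal n B
     \<longrightarrow> q j = of_int a \<and> k = \<sigma> j \<and>
         (\<forall>i\<in>{1..n}. \<sigma> i > \<sigma> j \<longrightarrow> ainv n A i j = 0))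
    \<and>
    (f (X j) - (Poly_Mapping.single 0 a * X k + u) \<in> bott_ideal n B \<and>
     f (X j - alpha A j) - (- (Poly_Mapping.single 0 a * (X k - alpha B k)) + u) \<in> bott_ideal n B
     \<longrightarrow> (\<exists>i\<in>{1..<j}. \<forall>l. alphavec A j l = 2 * of_int a / q i * yvec A i l))"
proof (intro conjI impI; elim conjE)
  assume h1: "f (X j) - (Poly_Mapping.single 0 a * X k + u) \<in> bott_ideal n B"
    and h2: "f (X j - alpha A j) - (Poly_Mapping.single 0 a * (X k - alpha B k) - u) \<in> bott_ideal n B"
  have "\<forall>l. q j * yvec B (\<sigma> j) l = of_int a * yvec B k l"
    using psi_y j psiQ_yvec_if_images[OF psi j h1 h2] by simp
  then have "\<sigma> j = k \<and> q j = of_int a"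
    using q_nz j a by (intro scaled_yvec_eq) auto
  moreover have "\<forall>l>k. psiQ n f (\<lambda>m. if m = j then 1 else 0) l = 0"
    using lin_eq_mod_bott_ideal[OF h1] lin_gt_ht ht_u psiQ_unit[OF j]
    by (simp add: lin_add lin_scale lin_X)
  ultimately show "q j = of_int a" "k = \<sigma> j" "\<forall>i\<in>{1..n}. \<sigma> i > \<sigma> j \<longrightarrow> ainv n A i j = 0"
    using ainv_eq_0_if_psiQ_vanishes_above[OF A sigma q_nz psi_y j] by auto
next
  assume h1: "f (X j) - (Poly_Mapping.single 0 a * X k + u) \<in> bott_ideal n B"
    and h2: "f (X j - alpha A j) - (- (Poly_Mapping.single 0 a * (X k - alpha B k)) + u) \<in> bott_ideal n B"
  obtain i0 where i0: "i0 \<in> {1..n}" "\<sigma> i0 = k"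
    using k by (metis imageE permutes_image[OF sigma])
  then have "i0 \<in> {1..<j} \<and> (\<forall>l. alphavec A j l = 2 * of_int a / q i0 * yvec A i0 l)"
    using a psiQ_alphavec_if_images[OF psi j h1 h2]
    by (intro alphavec_eq_scaled_yvec[OF A sigma q_nz psi_y j i0(1)]) auto
  then show "\<exists>i\<in>{1..<j}. \<forall>l. alphavec A j l = 2 * of_int a / q i * yvec A i l"
    by blast
qed

end
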